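(* Let $C=4+\frac{2}{\log2}$ and $x_n^*=\left\lfloor\sqrt{\frac{Cn}{\log n}}\right\rfloor$. For all sufficiently large $n$, $$\Big|\mu(N_n(x)\ge1)-\big[1-(1-\pi_x)^n\big]\Big|\le n^{-0.2}\qquad\text{for all } x=1,2,\dots,x_n^*.$$
   Context: $\mu$ is the Gauss measure on $(0,1)$, $d\mu(\omega)=\frac{d\omega}{(\log 2)(1+\omega)}$. For irrational $\omega\in(0,1)$, $a_i(\omega)$ denote its continued fraction partial quotients, and $N_n(x)=N_n(x,\omega)=\#\{1\le i\le n: a_i(\omega)=x\}$. For $x\in\mathbb{N}$, $\pi_x=\mu(a_1=x)=-\log_2\!\big(1-\frac{1}{(x+1)^2}\big)$. *)

theory Defs
  imports "HOL-Probability.Probability"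
begin

definition gauss_measure :: "real measure" where
  "gauss_measure = density lborel
     (\<lambda>w. ennreal (indicator {0<..<1} w / (ln 2 * (1 + w))))"

definition gauss_map :: "real \<Rightarrow> real" where
  "gauss_map w = frac (1 / w)"

definition cf_quot :: "nat \<Rightarrow> real \<Rightarrow> nat" where
  "cf_quot i w = nat \<lfloor>1 / (gauss_map ^^ (i - 1)) w\<rfloor>"

definition N_count :: "nat \<Rightarrow> nat \<Rightarrow> real \<Rightarrow> nat" where
  "N_count n x w = card {i \<in> {1..n}. cf_quot i w = x}"

definition pi_cf :: "nat \<Rightarrow> real" where
  "pi_cf x = - log 2 (1 - 1 / (real x + 1)^2)"

end

theory Submission
  imports Defs "HOL-Real_Asymp.Real_Asymp"
begin

text \<open>
  Let E (\<open>avoid_set x n\<close>) be the set of irrationals in (0,1) none of whose first n partial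
  quotients equals x. The difference in question is (1 - pi_x)^n - \<mu>(E), so it suffices to show
  that both numbers are at most n^(-0.2); for the first this follows from pi_x \<ge> 1/((x+1)^2 log 2).

  Conditionally on its first digits, T^n \<omega> has Lebesgue density h_s(t) = (1+s)/(1+st)^2
  (\<open>cf_density\<close>) for some s \<in> [0,1], and restricting to the first digit a turns h_s into
  p_a(s) h_{1/(a+s)} with p_a(s) = (1+s)/((a+s)(a+1+s)) (\<open>branch_weight\<close>). Hence
  I_n(s) = \<integral>_E h_s (\<open>avoid_integral\<close>) satisfies I_{n+1}(s) \<le> \<Sum>_{a \<noteq> x} p_a(s) I_n(1/(a+s)), and
  every \<phi> \<ge> 1 with \<Sum>_{a \<noteq> x} p_a(s) \<phi>(1/(a+s)) \<le> (1 - \<rho>) \<phi>(s) gives I_n \<le> 2 (1 - \<rho>)^n \<phi>.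
  The constant \<phi> = 1 yields \<rho> = 1/((x+1)(x+2)), which suffices for bounded x. For large x the
  Lyapunov function \<phi> = 1 + g/x^2 improves this to \<rho> = 1.395/x^2, and 1.395/C > 0.2 for
  C = 4 + 2/log 2.
\<close>

lemma cf_quot_1_bounds:
  assumes w: "w \<in> {0<..<1} - \<rat>"
  shows "cf_quot 1 w \<ge> 1" "real (cf_quot 1 w) < 1/w" "1/w < real (cf_quot 1 w) + 1"
    and "gauss_map w = 1/w - real (cf_quot 1 w)"
proof -
  have w0: "0 < w" "w < 1" "w \<notin> \<rat>" using w by auto
  have fl: "\<lfloor>1/w\<rfloor> \<ge> 1" using w0 by simp
  then have "\<lfloor>1/w\<rfloor> \<ge> 0" by linarith
  then have c: "real (cf_quot 1 w) = of_int \<lfloor>1/w\<rfloor>" unfolding cf_quot_def by simp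
  show "cf_quot 1 w \<ge> 1" using c fl by linarith
  have "1/w \<notin> \<rat>" using w0 by (metis Rats_inverse inverse_eq_divide inverse_inverse_eq)
  then have "of_int \<lfloor>1/w\<rfloor> \<noteq> 1/w" by (metis Rats_of_int)
  then show "real (cf_quot 1 w) < 1/w" using c of_int_floor_le[of "1/w"] by linarith
  show "1/w < real (cf_quot 1 w) + 1" using c real_of_int_floor_add_one_gt[of "1/w"] by linarith
  show "gauss_map w = 1/w - real (cf_quot 1 w)" using c by (simp add: gauss_map_def frac_def)
qed

lemma gauss_map_irrational:
  assumes w: "w \<in> {0<..<1} - \<rat>"
  shows "gauss_map w \<in> {0<..<1} - \<rat>"
proof -
  note a = cf_quot_1_bounds[OF w]
  have "1/w \<notin> \<rat>" using w by (metis DiffE Rats_inverse inverse_eq_divide inverse_inverse_eq)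
  then have "gauss_map w \<notin> \<rat>" using a(4) by (metis Rats_add Rats_of_nat diff_add_cancel)
  then show ?thesis using a(2,3,4) by auto
qed

lemma cf_quot_Suc: "i \<ge> 1 \<Longrightarrow> cf_quot (Suc i) w = cf_quot i (gauss_map w)"
  by (cases i) (simp_all add: cf_quot_def funpow_Suc_right del: funpow.simps)

lemma gauss_map_measurable[measurable]: "gauss_map \<in> borel_measurable borel"
  unfolding gauss_map_def frac_def by measurable

lemma funpow_gauss_map_measurable[measurable]: "(gauss_map ^^ k) \<in> borel_measurable borel"
  by (induction k) (simp_all add: measurable_ident_sets measurable_comp[OF _ gauss_map_measurable])

lemma cf_quot_eq_sets: "{w. cf_quot i w = x} \<in> sets borel"
proof -
  have "(\<lambda>w. \<lfloor>1 / (gauss_map ^^ (i - 1)) w\<rfloor>) \<in> measurable borel (count_space UNIV)"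
    by measurable
  then have "(\<lambda>w. \<lfloor>1 / (gauss_map ^^ (i - 1)) w\<rfloor>) -` {z. nat z = x} \<in> sets borel"
    using measurable_sets[of _ borel "count_space UNIV" "{z. nat z = x}"] by simp
  moreover have "{w. cf_quot i w = x} = (\<lambda>w. \<lfloor>1 / (gauss_map ^^ (i - 1)) w\<rfloor>) -` {z. nat z = x}"
    by (auto simp: cf_quot_def)
  ultimately show ?thesis by simp
qed

lemma irrationals_sets: "{0<..<1::real} - \<rat> \<in> sets borel"
proof -
  have "(\<rat>::real set) \<in> sets lborel"
    by (rule null_setsD2[OF countable_imp_null_set_lborel[OF countable_rat]])
  then show ?thesis by simp
qed

definition avoid_set :: "nat \<Rightarrow> nat \<Rightarrow> real set" where
  "avoid_set x n = {w \<in> {0<..<1} - \<rat>. \<forall>i\<in>{1..n}. cf_quot i w \<noteq> x}"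

lemma avoid_set_sets[measurable]: "avoid_set x n \<in> sets borel"
proof -
  have "avoid_set x n = ({0<..<1} - \<rat>) \<inter> (\<Inter>i\<in>{1..n}. - {w. cf_quot i w = x})"
    by (auto simp: avoid_set_def)
  then show ?thesis using irrationals_sets cf_quot_eq_sets by auto
qed

lemma avoid_set_subset: "avoid_set x n \<subseteq> {0<..<1} - \<rat>"
  by (auto simp: avoid_set_def)

lemma avoid_set_Suc:
  assumes "w \<in> avoid_set x (Suc n)"
  shows "cf_quot 1 w \<noteq> x" "gauss_map w \<in> avoid_set x n"
proof -
  have w: "w \<in> {0<..<1} - \<rat>" and a: "\<forall>i\<in>{1..Suc n}. cf_quot i w \<noteq> x"
    using assms by (auto simp: avoid_set_def)
  show "cf_quot 1 w \<noteq> x" using a by auto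
  have "\<forall>i\<in>{1..n}. cf_quot i (gauss_map w) \<noteq> x"
    using a cf_quot_Suc by (metis atLeastAtMost_iff Suc_le_mono le_SucI)
  then show "gauss_map w \<in> avoid_set x n" using gauss_map_irrational[OF w] by (simp add: avoid_set_def)
qed

lemma irrationals_Diff_avoid_set:
  "{w \<in> {0<..<1} - \<rat>. N_count n x w \<ge> 1} = ({0<..<1} - \<rat>) - avoid_set x n"
proof -
  have "N_count n x w \<ge> 1 \<longleftrightarrow> (\<exists>i\<in>{1..n}. cf_quot i w = x)" for w
    unfolding N_count_def by (auto simp: Suc_le_eq card_gt_0_iff)
  then show ?thesis unfolding avoid_set_def by blast
qed

definition cf_density :: "real \<Rightarrow> real \<Rightarrow> real" where
  "cf_density s t = (1 + s) / (1 + s * t)^2"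

definition branch_weight :: "real \<Rightarrow> real \<Rightarrow> real" where
  "branch_weight a s = (1 + s) / ((a + s) * (a + 1 + s))"

lemma branch_weight_nonneg: "a \<ge> 0 \<Longrightarrow> s \<ge> 0 \<Longrightarrow> branch_weight a s \<ge> 0"
  by (simp add: branch_weight_def)

lemma cf_density_nonneg: "s \<ge> 0 \<Longrightarrow> t \<ge> 0 \<Longrightarrow> cf_density s t \<ge> 0"
  by (simp add: cf_density_def)

lemma branch_weight_mult_cf_density:
  assumes "a \<ge> 1" "s \<ge> 0" "u \<ge> 0"
  shows "branch_weight a s * cf_density (1/(a + s)) u = (1 + s) / (a + s + u)^2"
proof -
  have "a + s > 0" "a + 1 + s > 0" "a + s + u > 0" using assms by linarith+
  then show ?thesis unfolding branch_weight_def cf_density_def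
    by (simp add: divide_simps) (simp add: algebra_simps power2_eq_square)
qed

lemma nn_integral_reciprocal_shift:
  fixes a :: real and F :: "real \<Rightarrow> real"
  assumes F[measurable]: "F \<in> borel_measurable borel" and a: "a > 0"
  shows "(\<integral>\<^sup>+t. ennreal (indicator {1/(a+1)..1/a} t * F t) \<partial>lborel)
       = (\<integral>\<^sup>+u. ennreal (indicator {0..1} u * F (1/(a+u)) / (a+u)^2) \<partial>lborel)"
proof -
  define g where "g v = 1/(a+1-v)" for v :: real
  define g' where "g' v = 1/(a+1-v)^2" for v :: real
  have "(\<integral>\<^sup>+t. ennreal (indicator {1/(a+1)..1/a} t * F t) \<partial>lborel) =
        (\<integral>\<^sup>+t. F t * indicator {g 0..g 1} t \<partial>lborel)"
    by (simp add: g_def mult.commute)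
  also have "\<dots> = (\<integral>\<^sup>+v. F (g v) * g' v * indicator {0..1} v \<partial>lborel)"
  proof (rule nn_integral_substitution)
    show "(g has_real_derivative g' v) (at v)" if "v \<in> {0..1}" for v
    proof -
      have "a + 1 - v \<noteq> 0" using that a by auto
      then show ?thesis unfolding g_def g'_def
        by (auto intro!: derivative_eq_intros simp: power2_eq_square field_simps)
    qed
    show "continuous_on {0..1} g'" unfolding g'_def using a by (intro continuous_intros) auto
  qed (simp_all add: g'_def set_borel_measurable_def)
  also have "\<dots> = (\<integral>\<^sup>+v. ennreal (indicator {0..1} (1 - v) * F (1/(a+(1-v))) / (a+(1-v))^2) \<partial>lborel)"
    by (intro nn_integral_cong) (simp add: g_def g'_def indicator_def add_diff_eq)
  also have "\<dots> = (\<integral>\<^sup>+u. ennreal (indicator {0..1} u * F (1/(a+u)) / (a+u)^2) \<partial>lborel)"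
    by (subst nn_integral_real_affine[where c="-1" and t=1]) simp_all
  finally show ?thesis .
qed

lemma nn_integral_branch:
  fixes a s :: real and A :: "real set"
  assumes A[measurable]: "A \<in> sets borel" and A01: "A \<subseteq> {0<..<1}" and a: "a \<ge> 1" and s: "s \<ge> 0"
  shows "(\<integral>\<^sup>+t. ennreal (indicator {1/(a+1)..1/a} t * (indicator A (1/t - a) * cf_density s t)) \<partial>lborel)
       = ennreal (branch_weight a s) * (\<integral>\<^sup>+u. ennreal (indicator A u * cf_density (1/(a+s)) u) \<partial>lborel)"
proof -
  have "(\<integral>\<^sup>+t. ennreal (indicator {1/(a+1)..1/a} t * (indicator A (1/t - a) * cf_density s t)) \<partial>lborel)
      = (\<integral>\<^sup>+u. ennreal (indicator {0..1} u * (indicator A (1/(1/(a+u)) - a) * cf_density s (1/(a+u))) / (a+u)^2) \<partial>lborel)"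
    using a by (intro nn_integral_reciprocal_shift) (simp_all add: cf_density_def)
  also have "\<dots> = (\<integral>\<^sup>+u. ennreal (branch_weight a s) * ennreal (indicator A u * cf_density (1/(a+s)) u) \<partial>lborel)"
  proof (intro nn_integral_cong)
    fix u :: real
    show "ennreal (indicator {0..1} u * (indicator A (1/(1/(a+u)) - a) * cf_density s (1/(a+u))) / (a+u)^2)
        = ennreal (branch_weight a s) * ennreal (indicator A u * cf_density (1/(a+s)) u)"
    proof (cases "u \<in> A")
      case True
      then have u: "0 < u" "u < 1" using A01 by auto
      then have "a + u > 0" "a + s + u > 0" using a s by auto
      then have "cf_density s (1/(a+u)) / (a+u)^2 = (1 + s) / (a + s + u)^2"
        unfolding cf_density_def by (simp add: divide_simps)
      moreover have "0 \<le> cf_density (1/(a+s)) u" using a s u by (simp add: cf_density_nonneg)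
      ultimately show ?thesis
        using True u \<open>a + u > 0\<close> branch_weight_mult_cf_density[OF a s, of u] branch_weight_nonneg[of a s] a s
        by (simp add: ennreal_mult[symmetric])
    qed simp
  qed
  also have "\<dots> = ennreal (branch_weight a s) * (\<integral>\<^sup>+u. ennreal (indicator A u * cf_density (1/(a+s)) u) \<partial>lborel)"
    by (rule nn_integral_cmult) (unfold cf_density_def, measurable)
  finally show ?thesis .
qed

lemma avoid_set_Suc_first_digit:
  assumes "t \<in> avoid_set x (Suc n)"
  obtains k where "Suc k \<noteq> x" "t \<in> {1/(real k + 1 + 1)..1/(real k + 1)}" "1/t - (real k + 1) \<in> avoid_set x n"
proof
  have t: "t \<in> {0<..<1} - \<rat>" using assms by (auto simp: avoid_set_def)
  note bounds = cf_quot_1_bounds[OF t]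
  define k where "k = cf_quot 1 t - 1"
  have digit: "real (cf_quot 1 t) = real k + 1" using bounds(1) unfolding k_def by simp
  show "Suc k \<noteq> x" using avoid_set_Suc(1)[OF assms] bounds(1) unfolding k_def by simp
  show "t \<in> {1/(real k + 1 + 1)..1/(real k + 1)}"
    using bounds(2,3) t unfolding digit by (simp add: field_simps)
  show "1/t - (real k + 1) \<in> avoid_set x n"
    using avoid_set_Suc(2)[OF assms] bounds(4) digit by simp
qed

definition avoid_integral :: "nat \<Rightarrow> nat \<Rightarrow> real \<Rightarrow> ennreal" where
  "avoid_integral x n s = (\<integral>\<^sup>+t. ennreal (indicator (avoid_set x n) t * cf_density s t) \<partial>lborel)"

lemma avoid_integral_Suc_le:
  assumes s: "s \<ge> 0"
  shows "avoid_integral x (Suc n) s \<le>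
    (\<Sum>k. ennreal (if Suc k \<noteq> x then branch_weight (real k + 1) s else 0) * avoid_integral x n (1/(real k + 1 + s)))"
proof -
  define T where "T k t = ennreal (if Suc k \<noteq> x then indicator {1/(real k + 1 + 1)..1/(real k + 1)} t *
          (indicator (avoid_set x n) (1/t - (real k + 1)) * cf_density s t) else 0)" for k t
  have cover: "ennreal (indicator (avoid_set x (Suc n)) t * cf_density s t) \<le> (\<Sum>k. T k t)" for t
  proof (cases "t \<in> avoid_set x (Suc n)")
    case True
    then obtain k where "Suc k \<noteq> x" "t \<in> {1/(real k + 1 + 1)..1/(real k + 1)}"
      "1/t - (real k + 1) \<in> avoid_set x n"
      by (rule avoid_set_Suc_first_digit)
    then have "T k t = ennreal (cf_density s t)" by (simp add: T_def)
    then show ?thesis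
      using True sum_le_suminf[OF summableI, of "{k}" "\<lambda>k. T k t"] by simp
  qed simp
  have "avoid_integral x (Suc n) s \<le> (\<integral>\<^sup>+t. (\<Sum>k. T k t) \<partial>lborel)"
    unfolding avoid_integral_def by (rule nn_integral_mono) (rule cover)
  also have "\<dots> = (\<Sum>k. \<integral>\<^sup>+t. T k t \<partial>lborel)"
    by (rule nn_integral_suminf) (unfold T_def cf_density_def, measurable)
  also have "\<dots> = (\<Sum>k. ennreal (if Suc k \<noteq> x then branch_weight (real k + 1) s else 0) *
                        avoid_integral x n (1/(real k + 1 + s)))"
  proof (rule suminf_cong)
    fix k
    show "(\<integral>\<^sup>+t. T k t \<partial>lborel) = ennreal (if Suc k \<noteq> x then branch_weight (real k + 1) s else 0) *
                        avoid_integral x n (1/(real k + 1 + s))"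
      unfolding T_def avoid_integral_def
      using nn_integral_branch[OF avoid_set_sets _ _ s, of x n "real k + 1"] avoid_set_subset[of x n]
      by auto
  qed
  finally show ?thesis .
qed

lemma cf_density_le_2: "s \<in> {0..1} \<Longrightarrow> t \<in> {0<..<1} \<Longrightarrow> cf_density s t \<le> 2"
proof -
  assume s: "s \<in> {0..1}" and t: "t \<in> {0<..<1}"
  have "1 \<le> (1 + s*t)^2" using s t by simp
  then have "(1+s)/(1+s*t)^2 \<le> (1+s)/1" using s by (intro divide_left_mono) auto
  then show ?thesis using s unfolding cf_density_def by simp
qed

lemma avoid_integral_0_le: "s \<in> {0..1} \<Longrightarrow> avoid_integral x 0 s \<le> 2"
proof -
  assume s: "s \<in> {0..1}"
  have "avoid_integral x 0 s \<le> (\<integral>\<^sup>+t. ennreal (2 * indicator {0<..<1::real} t) \<partial>lborel)"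
    unfolding avoid_integral_def using cf_density_le_2[OF s]
    by (intro nn_integral_mono ennreal_leI) (auto simp: avoid_set_def indicator_def)
  also have "\<dots> = 2" by (simp add: ennreal_mult ennreal_indicator nn_integral_cmult_indicator)
  finally show ?thesis .
qed

lemma avoid_integral_le_lyapunov:
  fixes \<phi> :: "real \<Rightarrow> real" and \<rho> :: real
  assumes \<phi>_ge_1: "\<And>s. s \<in> {0..1} \<Longrightarrow> 1 \<le> \<phi> s"
    and drift: "\<And>s. s \<in> {0..1} \<Longrightarrow>
       (\<Sum>k. ennreal (if Suc k \<noteq> x then branch_weight (real k + 1) s * \<phi> (1/(real k + 1 + s)) else 0))
         \<le> ennreal ((1 - \<rho>) * \<phi> s)"
    and \<rho>: "0 \<le> \<rho>" "\<rho> \<le> 1"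
  shows "s \<in> {0..1} \<Longrightarrow> avoid_integral x n s \<le> ennreal (2 * (1 - \<rho>)^n * \<phi> s)"
proof (induction n arbitrary: s)
  case 0
  then have "avoid_integral x 0 s \<le> ennreal 2" by (simp add: avoid_integral_0_le)
  also have "\<dots> \<le> ennreal (2 * (1 - \<rho>)^0 * \<phi> s)" using \<phi>_ge_1[OF 0] by (intro ennreal_leI) simp
  finally show ?case .
next
  case (Suc n)
  define c where "c = 2 * (1 - \<rho>)^n"
  define w where "w k = (if Suc k \<noteq> x then branch_weight (real k + 1) s else 0)" for k
  define s' where "s' k = 1/(real k + 1 + s)" for k
  have s0: "s \<ge> 0" using Suc.prems by auto
  have s': "s' k \<in> {0..1}" for k using s0 by (auto simp: s'_def field_simps)
  have w0: "w k \<ge> 0" for k using s0 by (simp add: w_def branch_weight_nonneg)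
  have c0: "c \<ge> 0" using \<rho> by (simp add: c_def)
  have "avoid_integral x (Suc n) s \<le> (\<Sum>k. ennreal (w k) * avoid_integral x n (s' k))"
    unfolding w_def s'_def by (rule avoid_integral_Suc_le[OF s0])
  also have "\<dots> \<le> (\<Sum>k. ennreal c * ennreal (w k * \<phi> (s' k)))"
  proof (intro suminf_le summableI)
    fix k
    have "ennreal (w k) * avoid_integral x n (s' k) \<le> ennreal (w k) * ennreal (c * \<phi> (s' k))"
      using Suc.IH[OF s'] by (intro mult_left_mono) (simp_all add: c_def)
    also have "\<dots> = ennreal c * ennreal (w k * \<phi> (s' k))"
      using w0[of k] c0 \<phi>_ge_1[OF s'[of k]] by (simp add: ennreal_mult[symmetric] mult.left_commute)
    finally show "ennreal (w k) * avoid_integral x n (s' k) \<le> ennreal c * ennreal (w k * \<phi> (s' k))" .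
  qed
  also have "\<dots> = ennreal c * (\<Sum>k. ennreal (w k * \<phi> (s' k)))"
    by (rule ennreal_suminf_cmult)
  also have "\<dots> \<le> ennreal c * ennreal ((1 - \<rho>) * \<phi> s)"
  proof -
    have "w k * \<phi> (s' k) = (if Suc k \<noteq> x then branch_weight (real k + 1) s * \<phi> (1/(real k + 1 + s)) else 0)" for k
      by (simp add: w_def s'_def)
    then show ?thesis using drift[OF Suc.prems] by (intro mult_left_mono) simp_all
  qed
  also have "\<dots> = ennreal (2 * (1 - \<rho>)^Suc n * \<phi> s)"
    using c0 \<rho> \<phi>_ge_1[OF Suc.prems] by (simp add: c_def ennreal_mult[symmetric] mult_ac)
  finally show ?case .
qed

lemma telescope_inverse_sums: "(\<lambda>k. 1/(real k + c) - 1/(real (Suc k) + c)) sums (1/c)"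
proof -
  have "(\<lambda>k. inverse (c + real k)) \<longlonglongrightarrow> 0"
    by (intro tendsto_inverse_0_at_top filterlim_tendsto_add_at_top[OF tendsto_const] filterlim_real_sequentially)
  then have "(\<lambda>k. 1/(real k + c)) \<longlonglongrightarrow> 0" by (simp add: divide_inverse add.commute)
  from telescope_sums'[OF this] show ?thesis by simp
qed

lemma inverse_consecutive_sums:
  assumes "c > 0"
  shows "(\<lambda>k. 1/((real k + c) * (real k + c + 1))) sums (1/c)"
proof -
  have "1/((real k + c) * (real k + c + 1)) = 1/(real k + c) - 1/(real (Suc k) + c)" for k
  proof -
    have "real k + c > 0" using assms by (simp add: add_nonneg_pos)
    then show ?thesis by (simp add: divide_simps)
  qed
  then show ?thesis using telescope_inverse_sums[of c] by simp
qed

lemma inverse_gap2_sums: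
  assumes "c > 0"
  shows "(\<lambda>k. 1/((real k + c) * (real k + c + 2))) sums ((1/c + 1/(c + 1)) / 2)"
proof -
  have "(\<lambda>k. 1/((real k + c) * (real k + c + 2))) = (\<lambda>k.
      ((1/(real k + c) - 1/(real (Suc k) + c)) + (1/(real k + (c + 1)) - 1/(real (Suc k) + (c + 1)))) / 2)"
  proof
    fix k
    have "real k + c > 0" using assms by (simp add: add_nonneg_pos)
    then show "1/((real k + c) * (real k + c + 2)) =
      ((1/(real k + c) - 1/(real (Suc k) + c)) + (1/(real k + (c + 1)) - 1/(real (Suc k) + (c + 1)))) / 2"
      by (simp add: divide_simps) (simp add: algebra_simps)
  qed
  then show ?thesis by (simp only:) (intro sums_divide sums_add telescope_inverse_sums)
qed

lemma branch_weight_sums: "s \<ge> 0 \<Longrightarrow> (\<lambda>k. branch_weight (real k + 1) s) sums 1"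
  using sums_mult[OF inverse_consecutive_sums[of "1 + s"], of "1 + s"]
  by (simp add: branch_weight_def add_ac)

lemma ennreal_suminf_skip:
  assumes "x \<ge> 1" and "\<And>k. T k \<ge> 0" and "T sums S"
  shows "(\<Sum>k. ennreal (if Suc k \<noteq> x then T k else 0)) = ennreal (S - T (x - 1))"
proof -
  have "(\<lambda>k. if k \<in> {x - 1} then 0 else T k) sums (S + (\<Sum>k\<in>{x - 1}. 0 - T k))"
    by (rule sums_If_finite_set'[OF assms(3)]) auto
  moreover have "(\<lambda>k. if k \<in> {x - 1} then 0 else T k) = (\<lambda>k. if Suc k \<noteq> x then T k else 0)"
    using assms(1) by (auto simp: fun_eq_iff)
  ultimately have "(\<lambda>k. if Suc k \<noteq> x then T k else 0) sums (S - T (x - 1))" by simp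
  moreover have "(\<Sum>k. ennreal (if Suc k \<noteq> x then T k else 0)) = ennreal (\<Sum>k. if Suc k \<noteq> x then T k else 0)"
    by (rule suminf_ennreal2) (use calculation assms(2) in \<open>auto simp: sums_iff\<close>)
  ultimately show ?thesis by (simp add: sums_iff)
qed

text \<open>
  The coefficients 24/5 and 17/5 are tuned so that \<open>lyap_drift_ge\<close> gives 7/5, just above the
  C/5 \<approx> 1.377 needed for the exponent 0.2.
\<close>

definition lyap_corr :: "real \<Rightarrow> real" where
  "lyap_corr u = 24/5 / (1 + 2 * u) - 17/5 / (1 + 3 * u)"

definition lyap_corr_mean :: "real \<Rightarrow> real" where
  "lyap_corr_mean s = (1 + s) * (24/5 / (2 + s) - 17/10 * (1 / (2 + s) + 1 / (3 + s)))"

definition lyapunov :: "real \<Rightarrow> real \<Rightarrow> real" where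
  "lyapunov X u = 1 + lyap_corr u / X"

lemma lyap_corr_nonneg: "u \<ge> 0 \<Longrightarrow> lyap_corr u \<ge> 0"
  by (simp add: lyap_corr_def field_simps)

lemma lyap_corr_le: "u \<ge> 0 \<Longrightarrow> lyap_corr u \<le> 3/2"
proof -
  assume u: "u \<ge> 0"
  have "3/2 * ((1 + 2 * u) * (1 + 3 * u)) - (24/5 * (1 + 3 * u) - 17/5 * (1 + 2 * u))
      = 9 * (u - 1/180)^2 + 359/3600"
    by (simp add: power2_eq_square field_simps)
  then have "24/5 * (1 + 3 * u) - 17/5 * (1 + 2 * u) \<le> 3/2 * ((1 + 2 * u) * (1 + 3 * u))"
    using zero_le_power2[of "u - 1/180"] by linarith
  moreover have "(1 + 2 * u) * (1 + 3 * u) > 0" using u by simp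
  moreover have "lyap_corr u = (24/5 * (1 + 3 * u) - 17/5 * (1 + 2 * u)) / ((1 + 2 * u) * (1 + 3 * u))"
    using u by (simp add: lyap_corr_def field_simps)
  ultimately show ?thesis by (simp add: pos_divide_le_eq)
qed

lemma lyap_drift_ge: "s \<ge> 0 \<Longrightarrow> lyap_corr s - lyap_corr_mean s + 1 + s \<ge> 7/5"
proof -
  assume s: "s \<ge> 0"
  define p where "p = 1 + 78 * s - 237 * s^2 + 48 * s^3 + 242 * s^4 + 60 * s^5"
  have pos: "1 + 2 * s > 0" "1 + 3 * s > 0" "2 + s > 0" "3 + s > 0" using s by auto
  then have "lyap_corr s - lyap_corr_mean s + 1 + s - 7/5 = p / (10 * ((1 + 2 * s) * (1 + 3 * s) * (2 + s) * (3 + s)))"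
    unfolding lyap_corr_def lyap_corr_mean_def p_def
    by (simp add: divide_simps) (simp add: algebra_simps eval_nat_numeral)
  moreover have "p \<ge> 0"
  proof -
    have "242 * s^3 + 48 * s^2 - 237 * s + 78 = 242 * ((s - 51/100)^2 * (s + 7371/6050)) + 3963/5000 * s + 328029/250000"
      by (simp add: power2_eq_square power3_eq_cube algebra_simps)
    then have "0 \<le> 242 * s^3 + 48 * s^2 - 237 * s + 78" using s by simp
    then have "0 \<le> s * (242 * s^3 + 48 * s^2 - 237 * s + 78)" using s by simp
    moreover have "p = 1 + s * (242 * s^3 + 48 * s^2 - 237 * s + 78) + 60 * s^5"
      by (simp add: p_def algebra_simps eval_nat_numeral)
    ultimately show ?thesis using s by simp
  qed
  then have "0 \<le> p / (10 * ((1 + 2 * s) * (1 + 3 * s) * (2 + s) * (3 + s)))" using pos by simp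
  ultimately show ?thesis by linarith
qed

lemma branch_weight_lyapunov_sums:
  assumes s: "s \<ge> 0"
  shows "(\<lambda>k. branch_weight (real k + 1) s * lyapunov X (1/(real k + 1 + s))) sums (1 + lyap_corr_mean s / X)"
proof -
  have split: "branch_weight (real k + 1) s * lyapunov X (1/(real k + 1 + s)) =
      branch_weight (real k + 1) s
      + 24/5/X * (1 + s) * (1 / ((real k + (2 + s)) * (real k + (2 + s) + 1)))
      - 17/5/X * (1 + s) * (1 / ((real k + (2 + s)) * (real k + (2 + s) + 2)))" for k
  proof -
    have "real k + 1 + s > 0" using s by simp
    then show ?thesis unfolding branch_weight_def lyapunov_def lyap_corr_def
      by (simp add: divide_simps) (simp add: algebra_simps)
  qed
  have limit: "1 + 24/5/X * (1 + s) * (1 / (2 + s)) - 17/5/X * (1 + s) * ((1 / (2 + s) + 1 / (2 + s + 1)) / 2)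
      = 1 + lyap_corr_mean s / X"
    by (simp add: lyap_corr_mean_def algebra_simps add_divide_distrib diff_divide_distrib)
  have "(\<lambda>k. branch_weight (real k + 1) s
      + 24/5/X * (1 + s) * (1 / ((real k + (2 + s)) * (real k + (2 + s) + 1)))
      - 17/5/X * (1 + s) * (1 / ((real k + (2 + s)) * (real k + (2 + s) + 2))))
    sums (1 + 24/5/X * (1 + s) * (1 / (2 + s)) - 17/5/X * (1 + s) * ((1 / (2 + s) + 1 / (2 + s + 1)) / 2))"
    using s by (intro sums_add sums_diff sums_mult branch_weight_sums inverse_consecutive_sums inverse_gap2_sums) auto
  then show ?thesis unfolding split by (simp only: limit)
qed

lemma branch_weight_ge: "y \<ge> 1 \<Longrightarrow> s \<in> {0..1} \<Longrightarrow> branch_weight y s \<ge> (1 + s) / ((y + 1) * (y + 2))"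
  unfolding branch_weight_def by (intro divide_left_mono mult_mono) auto

lemma square_div_succ_mult_ge: "(y::real) \<ge> 2000 \<Longrightarrow> y^2 / ((y + 1) * (y + 2)) \<ge> 1997/2000"
proof -
  assume y: "y \<ge> 2000"
  have "y * 2000 \<le> y * y" using y by (intro mult_left_mono) auto
  moreover have "1997/2000 * ((y + 1) * (y + 2)) = 1997/2000 * (y * y) + 5991/2000 * y + 3994/2000"
    by (simp add: algebra_simps)
  ultimately have "1997/2000 * ((y + 1) * (y + 2)) \<le> y^2" using y unfolding power2_eq_square by linarith
  moreover have "(y + 1) * (y + 2) > 0" using y by simp
  ultimately show ?thesis by (simp add: le_divide_eq)
qed

lemma lyapunov_contraction:
  fixes y s :: real
  assumes y: "y \<ge> 2000" and s: "s \<in> {0..1}"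
  shows "1 + lyap_corr_mean s / y^2 - branch_weight y s * lyapunov (y^2) (1/(y + s))
    \<le> (1 - (279/200) / y^2) * lyapunov (y^2) s"
proof -
  define X where "X = y^2"
  define Q where "Q = (1 + s) / ((y + 1) * (y + 2))"
  define G where "G = lyap_corr s"
  define r :: real where "r = 279/200"
  have X: "X \<ge> 4000000" unfolding X_def using power_mono[OF y, of 2] by simp
  have G: "0 \<le> G" "G \<le> 3/2" using lyap_corr_nonneg lyap_corr_le s unfolding G_def by auto
  have "X * Q = (1 + s) * (y^2 / ((y + 1) * (y + 2)))" unfolding X_def Q_def by simp
  also have "\<dots> \<ge> (1 + s) * (1997/2000)"
    using square_div_succ_mult_ge[OF y] s by (intro mult_left_mono) auto
  finally have XQ: "X * Q \<ge> (1 + s) - 3/1000" using s by simp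
  have "r * G \<le> 3" using G unfolding r_def by simp
  then have "r * G / X \<le> 3 / X" using X by (simp add: divide_right_mono)
  also have "\<dots> \<le> 1/1000" using X by (simp add: field_simps)
  \<comment> \<open>the errors in \<open>X * Q \<approx> 1 + s\<close> and \<open>r * G / X \<approx> 0\<close> fit into the slack 7/5 - r\<close>
  finally have "lyap_corr_mean s - X * Q \<le> G - r - r * G / X"
    using lyap_drift_ge[of s] s XQ unfolding G_def r_def by auto
  then have "(lyap_corr_mean s - X * Q) / X \<le> (G - r - r * G / X) / X"
    using X by (intro divide_right_mono) auto
  moreover have "(lyap_corr_mean s - X * Q) / X = lyap_corr_mean s / X - Q" using X by (simp add: field_simps)
  ultimately have main: "lyap_corr_mean s / X - Q \<le> G / X - r / X - r * G / X / X"
    by (simp add: diff_divide_distrib)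
  have "Q \<le> branch_weight y s" unfolding Q_def using branch_weight_ge y s by simp
  also have "\<dots> \<le> branch_weight y s * lyapunov X (1/(y + s))"
    using lyap_corr_nonneg[of "1/(y + s)"] branch_weight_nonneg[of y s] y s X
    by (intro mult_le_cancel_left1[THEN iffD2]) (auto simp: lyapunov_def)
  finally have "Q \<le> branch_weight y s * lyapunov X (1/(y + s))" .
  moreover have "(1 - r / X) * lyapunov X s = 1 + G / X - r / X - r * G / X / X"
    unfolding lyapunov_def G_def by (simp add: algebra_simps)
  ultimately show ?thesis using main unfolding X_def[symmetric] r_def[symmetric] by linarith
qed

lemma avoid_integral_small_digit:
  assumes x: "x \<ge> 1"
  shows "avoid_integral x n 0 \<le> ennreal (2 * (1 - 1 / ((real x + 1) * (real x + 2)))^n)"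
proof -
  have "avoid_integral x n 0 \<le> ennreal (2 * (1 - 1 / ((real x + 1) * (real x + 2)))^n * 1)"
  proof (rule avoid_integral_le_lyapunov[where \<phi>="\<lambda>_. 1"])
    have "1 * 1 \<le> (real x + 1) * (real x + 2)" by (intro mult_mono) auto
    then show "1 / ((real x + 1) * (real x + 2)) \<le> 1" by simp
    fix s :: real assume s: "s \<in> {0..1}"
    have "(\<Sum>k. ennreal (if Suc k \<noteq> x then branch_weight (real k + 1) s * 1 else 0))
        = ennreal (1 - branch_weight (real (x - 1) + 1) s * 1)"
      using s by (intro ennreal_suminf_skip x) (auto simp: branch_weight_nonneg branch_weight_sums)
    also have "real (x - 1) + 1 = real x" using x by simp
    also have "1 - branch_weight (real x) s * 1 \<le> (1 - 1 / ((real x + 1) * (real x + 2))) * 1"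
      using branch_weight_ge[of "real x" s] x s divide_right_mono[of 1 "1 + s" "(real x + 1) * (real x + 2)"]
      by simp
    finally show "(\<Sum>k. ennreal (if Suc k \<noteq> x then branch_weight (real k + 1) s * 1 else 0))
        \<le> ennreal ((1 - 1 / ((real x + 1) * (real x + 2))) * 1)"
      by (simp add: ennreal_leI)
  qed simp_all
  then show ?thesis by simp
qed

lemma avoid_integral_large_digit:
  assumes x: "x \<ge> 2000"
  shows "avoid_integral x n 0 \<le> ennreal (4 * (1 - (279/200) / (real x)^2)^n)"
proof -
  define X where "X = (real x)^2"
  have X: "X \<ge> 4000000" unfolding X_def using power_mono[of 2000 "real x" 2] x by simp
  have "avoid_integral x n 0 \<le> ennreal (2 * (1 - (279/200) / X)^n * lyapunov X 0)"
  proof (rule avoid_integral_le_lyapunov)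
    show "1 \<le> lyapunov X s" if "s \<in> {0..1}" for s
      unfolding lyapunov_def using lyap_corr_nonneg[of s] that X by simp
    fix s :: real assume s: "s \<in> {0..1}"
    have "(\<Sum>k. ennreal (if Suc k \<noteq> x then branch_weight (real k + 1) s * lyapunov X (1/(real k + 1 + s)) else 0))
       = ennreal (1 + lyap_corr_mean s / X - branch_weight (real (x - 1) + 1) s * lyapunov X (1/(real (x - 1) + 1 + s)))"
      using s X x
      by (intro ennreal_suminf_skip branch_weight_lyapunov_sums mult_nonneg_nonneg branch_weight_nonneg)
         (auto simp: lyapunov_def lyap_corr_nonneg)
    also have "real (x - 1) + 1 = real x" using x by simp
    also have "ennreal (1 + lyap_corr_mean s / X - branch_weight (real x) s * lyapunov X (1/(real x + s)))
        \<le> ennreal ((1 - (279/200) / X) * lyapunov X s)"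
      using lyapunov_contraction[of "real x" s] x s unfolding X_def by (intro ennreal_leI) simp
    finally show "(\<Sum>k. ennreal (if Suc k \<noteq> x then branch_weight (real k + 1) s * lyapunov X (1/(real k + 1 + s)) else 0))
       \<le> ennreal ((1 - (279/200) / X) * lyapunov X s)" .
  qed (use X in simp_all)
  also have "\<dots> \<le> ennreal (2 * (1 - (279/200) / X)^n * 2)"
  proof (intro ennreal_leI mult_left_mono)
    show "lyapunov X 0 \<le> 2" using X by (simp add: lyapunov_def lyap_corr_def)
  qed (use X in simp)
  finally show ?thesis unfolding X_def by simp
qed

lemma emeasure_gauss_measure:
  "A \<in> sets borel \<Longrightarrow> emeasure gauss_measure A =
     (\<integral>\<^sup>+w. ennreal (indicator {0<..<1} w / (ln 2 * (1 + w))) * indicator A w \<partial>lborel)"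
  unfolding gauss_measure_def by (subst emeasure_density) auto

lemma emeasure_gauss_irrationals: "emeasure gauss_measure ({0<..<1} - \<rat>) = 1"
proof -
  define f where "f w = 1 / (ln 2 * (1 + w))" for w :: real
  have "(f has_integral (ln (1 + 1) / ln 2 - ln (1 + 0) / ln 2)) {0..1}"
  proof (rule fundamental_theorem_of_calculus)
    fix x :: real assume "x \<in> {0..1}"
    then have "((\<lambda>w. ln (1 + w) / ln 2) has_real_derivative (1 / (1 + x) / ln 2)) (at x within {0..1})"
      by (auto intro!: derivative_eq_intros)
    then show "((\<lambda>w. ln (1 + w) / ln 2) has_vector_derivative f x) (at x within {0..1})"
      unfolding f_def has_real_derivative_iff_has_vector_derivative[symmetric] by (simp add: field_simps)
  qed simp
  then have f_integral: "(f has_integral 1) {0..1}" by simp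
  have "AE w in lborel. w \<notin> \<rat>"
    by (rule AE_not_in[OF countable_imp_null_set_lborel[OF countable_rat]])
  then have "emeasure gauss_measure ({0<..<1} - \<rat>) = (\<integral>\<^sup>+w. ennreal (f w) * indicator {0..1} w \<partial>lborel)"
    unfolding emeasure_gauss_measure[OF irrationals_sets]
    by (intro nn_integral_cong_AE) (auto elim!: eventually_mono simp: indicator_def f_def)
  also have "\<dots> = ennreal 1"
    by (rule nn_integral_has_integral_lebesgue'[OF _ f_integral]) (auto simp: f_def)
  finally show ?thesis by simp
qed

lemma measure_avoid_set_le:
  assumes "avoid_integral x n 0 \<le> ennreal B" "B \<ge> 0"
  shows "measure gauss_measure (avoid_set x n) \<le> B / ln 2"
proof -
  have "emeasure gauss_measure (avoid_set x n) =
     (\<integral>\<^sup>+w. ennreal (indicator {0<..<1} w / (ln 2 * (1 + w))) * indicator (avoid_set x n) w \<partial>lborel)"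
    by (rule emeasure_gauss_measure[OF avoid_set_sets])
  also have "\<dots> \<le> (\<integral>\<^sup>+w. ennreal (1 / ln 2) * ennreal (indicator (avoid_set x n) w * cf_density 0 w) \<partial>lborel)"
  proof (intro nn_integral_mono)
    fix w
    have "w \<in> avoid_set x n \<Longrightarrow> 1 / (ln 2 * (1 + w)) \<le> 1 / ln 2"
      by (intro divide_left_mono) (auto simp: avoid_set_def)
    then show "ennreal (indicator {0<..<1} w / (ln 2 * (1 + w))) * indicator (avoid_set x n) w
        \<le> ennreal (1 / ln 2) * ennreal (indicator (avoid_set x n) w * cf_density 0 w)"
      by (auto simp: indicator_def cf_density_def avoid_set_def intro: ennreal_leI)
  qed
  also have "\<dots> = ennreal (1 / ln 2) * avoid_integral x n 0"
    unfolding avoid_integral_def by (rule nn_integral_cmult) (unfold cf_density_def, measurable)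
  also have "\<dots> \<le> ennreal (1 / ln 2) * ennreal B" using assms(1) by (intro mult_left_mono) auto
  also have "\<dots> = ennreal (B / ln 2)" using assms(2) by (simp add: ennreal_mult[symmetric])
  finally have "emeasure gauss_measure (avoid_set x n) \<le> ennreal (B / ln 2)" .
  then show ?thesis using assms(2) by (simp add: measure_def enn2real_leI)
qed

text \<open>The library bound \<open>ln2_ge_two_thirds\<close> would only give C \<le> 7, and 1.395/7 < 0.2.\<close>

lemma ln2_ge_689_over_1000: "ln (2::real) \<ge> 689/1000"
proof -
  have "1 - 689/64000 \<le> exp (- (689/64000::real))" using exp_ge_add_one_self[of "-(689/64000)"] by simp
  then have "exp (689/64000::real) * (1 - 689/64000) \<le> exp (689/64000) * exp (-(689/64000))"
    by (intro mult_left_mono) auto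
  then have bound: "exp (689/64000::real) \<le> 64000/63311" by (simp add: exp_minus field_simps)
  have "exp (689/1000::real) = exp (689/64000) ^ 64" by (simp add: exp_of_nat_mult[symmetric])
  also have "\<dots> \<le> (64000/63311) ^ 64" by (intro power_mono bound) simp
  also have "\<dots> \<le> (2::real)" by (simp add: power_divide)
  finally show ?thesis by (subst ln_ge_iff) auto
qed

lemma gauss_const_le: "4 + 2 / ln (2::real) \<le> 1381/200"
proof -
  have "2 / ln (2::real) \<le> 2 / (689/1000)" using ln2_ge_689_over_1000 by (intro divide_left_mono) auto
  then show ?thesis by simp
qed

lemma one_minus_power_le_exp: "0 \<le> 1 - a \<Longrightarrow> (1 - a)^n \<le> exp (- (a * real n))"
proof -
  assume "0 \<le> 1 - a"
  then have "(1 - a)^n \<le> exp (-a)^n" by (intro power_mono) (use exp_ge_add_one_self[of "-a"] in auto)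
  also have "\<dots> = exp (- (a * real n))" by (simp add: exp_of_nat_mult[symmetric] mult.commute)
  finally show ?thesis .
qed

lemma measure_avoid_set_small_digit:
  assumes "1 \<le> x" "x \<le> 2000"
  shows "measure gauss_measure (avoid_set x n) \<le> 3 * exp (- real n / (2001 * 2002))"
proof -
  define \<rho> where "\<rho> = 1 / ((real x + 1) * (real x + 2))"
  have "1 * 1 \<le> (real x + 1) * (real x + 2)" by (intro mult_mono) auto
  then have \<rho>1: "\<rho> \<le> 1" by (simp add: \<rho>_def)
  have "(real x + 1) * (real x + 2) \<le> 2001 * 2002" using assms by (intro mult_mono) auto
  then have \<rho>0: "\<rho> \<ge> 1 / (2001 * 2002)" unfolding \<rho>_def by (intro divide_left_mono) auto
  have "(1 - \<rho>)^n \<le> exp (- (\<rho> * real n))" using \<rho>1 by (intro one_minus_power_le_exp) simp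
  also have "\<dots> \<le> exp (- real n / (2001 * 2002))" using \<rho>0 mult_right_mono[OF \<rho>0, of "real n"] by simp
  finally have decay: "(1 - \<rho>)^n \<le> exp (- real n / (2001 * 2002))" .
  have "measure gauss_measure (avoid_set x n) \<le> 2 * (1 - \<rho>)^n / ln 2"
    using avoid_integral_small_digit[OF assms(1)] \<rho>1 unfolding \<rho>_def by (intro measure_avoid_set_le) auto
  also have "\<dots> \<le> 2 * (1 - \<rho>)^n / (2/3)"
    using ln2_ge_two_thirds \<rho>1 by (intro divide_left_mono) auto
  also have "\<dots> \<le> 3 * exp (- real n / (2001 * 2002))" using decay by simp
  finally show ?thesis .
qed

lemma measure_avoid_set_large_digit:
  assumes x: "2000 \<le> x" and n: "n \<ge> 2" and x_le: "real x \<le> sqrt ((4 + 2 / ln 2) * real n / ln (real n))"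
  shows "measure gauss_measure (avoid_set x n) \<le> 6 * real n powr (- 202/1000)"
proof -
  define X where "X = (real x)^2"
  define L where "L = ln (real n)"
  define r :: real where "r = 279/200"
  have L: "L > 0" unfolding L_def using n by simp
  have X: "X \<ge> 4000000" unfolding X_def using power_mono[of 2000 "real x" 2] x by simp
  have rX: "0 \<le> 1 - r / X" using X by (simp add: r_def)
  have "X \<le> (sqrt ((4 + 2 / ln 2) * real n / L))^2" using x_le unfolding X_def L_def by (intro power_mono) auto
  also have "\<dots> = (4 + 2 / ln 2) * real n / L" using L by simp
  finally have "X * L \<le> 1381/200 * real n"
    using L mult_right_mono[OF gauss_const_le, of "real n"] by (simp add: le_divide_eq)
  then have exponent: "202/1000 * L \<le> r / X * real n" using X L by (simp add: r_def field_simps)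
  have "(1 - r / X)^n \<le> exp (- (r / X * real n))" by (rule one_minus_power_le_exp[OF rX])
  also have "\<dots> \<le> exp (- (202/1000 * L))" using exponent by simp
  also have "\<dots> = real n powr (- 202/1000)" using n by (simp add: L_def powr_def)
  finally have decay: "(1 - r / X)^n \<le> real n powr (- 202/1000)" .
  have "measure gauss_measure (avoid_set x n) \<le> 4 * (1 - r / X)^n / ln 2"
    using avoid_integral_large_digit[OF x] rX unfolding X_def r_def by (intro measure_avoid_set_le) auto
  also have "\<dots> \<le> 4 * (1 - r / X)^n / (2/3)"
    using ln2_ge_two_thirds rX by (intro divide_left_mono) auto
  also have "\<dots> \<le> 6 * real n powr (- 202/1000)" using decay by simp
  finally show ?thesis .
qed

lemma eventually_measure_avoid_set_le:
  "eventually (\<lambda>n. \<forall>x. 1 \<le> x \<and> real x \<le> sqrt ((4 + 2 / ln 2) * real n / ln (real n)) \<longrightarrow>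
      measure gauss_measure (avoid_set x n) \<le> real n powr (-0.2)) sequentially"
proof -
  have "eventually (\<lambda>n. 6 * real n powr (- 202/1000) \<le> real n powr (-0.2)) sequentially"
       "eventually (\<lambda>n. 3 * exp (- real n / (2001 * 2002)) \<le> real n powr (-0.2)) sequentially"
    by real_asymp+
  moreover have "eventually (\<lambda>n. n \<ge> 2) sequentially" by simp
  ultimately show ?thesis
  proof eventually_elim
    case (elim n)
    show ?case
    proof (intro allI impI, elim conjE)
      fix x assume x: "1 \<le> x" and x_le: "real x \<le> sqrt ((4 + 2 / ln 2) * real n / ln (real n))"
      show "measure gauss_measure (avoid_set x n) \<le> real n powr (-0.2)"
      proof (cases "x \<le> 2000")
        case True
        then show ?thesis using measure_avoid_set_small_digit[OF x True, of n] elim by linarith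
      next
        case False
        then show ?thesis using measure_avoid_set_large_digit[of x n] x_le elim by linarith
      qed
    qed
  qed
qed

lemma pi_cf_bounds:
  assumes "x \<ge> 1"
  shows "1 / ((real x + 1)^2 * ln 2) \<le> pi_cf x" "pi_cf x \<le> 1"
proof -
  define y where "y = 1 / (real x + 1)^2"
  have "(2::real)^2 \<le> (real x + 1)^2" using assms by (intro power_mono) auto
  then have y: "0 < y" "y \<le> 1/4" unfolding y_def by (simp_all add: field_simps)
  have pi_eq: "pi_cf x = - ln (1 - y) / ln 2" unfolding pi_cf_def y_def by (simp add: log_def)
  have "y \<le> - ln (1 - y)" using ln_one_minus_pos_upper_bound[of y] y by simp
  then have "y / ln 2 \<le> - ln (1 - y) / ln 2" by (intro divide_right_mono) auto
  then show "1 / ((real x + 1)^2 * ln 2) \<le> pi_cf x" unfolding pi_eq y_def by simp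
  have "ln (1/2) \<le> ln (1 - y)" using y by (subst ln_le_cancel_iff) auto
  then have "- ln (1 - y) \<le> ln 2" by (simp add: ln_div)
  then show "pi_cf x \<le> 1" unfolding pi_eq by (simp add: le_divide_eq)
qed

lemma succ_square_le_of_le_sqrt:
  assumes x: "real x \<le> sqrt ((4 + 2 / ln 2) * real n / L)" and L: "L > 0"
  shows "(real x + 1)^2 \<le> 101/100 * (1381/200 * real n / L) + 101"
proof -
  define A where "A = (4 + 2 / ln 2) * real n / L"
  have A: "A \<ge> 0" using L by (simp add: A_def)
  have "(real x + 1)^2 \<le> (sqrt A + 1)^2" using x unfolding A_def by (intro power_mono) auto
  also have "\<dots> = 101/100 * A + 101 - (sqrt A / 10 - 10)^2"
    using A by (simp add: power2_eq_square field_simps)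
  also have "\<dots> \<le> 101/100 * A + 101" by simp
  also have "\<dots> \<le> 101/100 * (1381/200 * real n / L) + 101"
    unfolding A_def using L gauss_const_le by (intro add_right_mono mult_left_mono divide_right_mono mult_right_mono) auto
  finally show ?thesis .
qed

lemma eventually_no_hit_prob_le:
  "eventually (\<lambda>n. \<forall>x. 1 \<le> x \<and> real x \<le> sqrt ((4 + 2 / ln 2) * real n / ln (real n)) \<longrightarrow>
      (1 - pi_cf x)^n \<le> real n powr (-0.2)) sequentially"
proof -
  have "eventually (\<lambda>n. (101/100 * (1381/200 * real n / ln (real n)) + 101) * (25/36) * (2/10) * ln (real n)
      \<le> real n) sequentially"
    by real_asymp
  moreover have "eventually (\<lambda>n. n \<ge> 2) sequentially" by simp
  ultimately show ?thesis
  proof eventually_elim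
    case (elim n)
    define L where "L = ln (real n)"
    have L: "L > 0" unfolding L_def using elim by simp
    show ?case
    proof (intro allI impI, elim conjE)
      fix x assume x: "1 \<le> x" and x_le: "real x \<le> sqrt ((4 + 2 / ln 2) * real n / ln (real n))"
      have "(real x + 1)^2 * ln 2 * (2/10) * L \<le> (101/100 * (1381/200 * real n / L) + 101) * (25/36) * (2/10) * L"
        using succ_square_le_of_le_sqrt[OF x_le[folded L_def] L] ln2_le_25_over_36 L
        by (intro mult_right_mono mult_mono) auto
      also have "\<dots> \<le> real n" using elim(1) unfolding L_def .
      finally have "2/10 * L \<le> real n * (1 / ((real x + 1)^2 * ln 2))" by (simp add: field_simps)
      also have "\<dots> \<le> real n * pi_cf x" using pi_cf_bounds(1)[OF x] by (intro mult_left_mono) auto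
      finally have exponent: "2/10 * L \<le> pi_cf x * real n" by (simp add: mult.commute)
      have "(1 - pi_cf x)^n \<le> exp (- (pi_cf x * real n))"
        using pi_cf_bounds(2)[OF x] by (intro one_minus_power_le_exp) simp
      also have "\<dots> \<le> exp (- (2/10 * L))" using exponent by simp
      also have "\<dots> = real n powr (-0.2)" using elim by (simp add: L_def powr_def)
      finally show "(1 - pi_cf x)^n \<le> real n powr (-0.2)" .
    qed
  qed
qed

lemma measure_hit_set:
  "measure gauss_measure {w \<in> {0<..<1} - \<rat>. N_count n x w \<ge> 1} = 1 - measure gauss_measure (avoid_set x n)"
proof -
  have "emeasure gauss_measure ({0<..<1} - \<rat>) \<noteq> \<infinity>" by (simp add: emeasure_gauss_irrationals)
  then show ?thesis unfolding irrationals_Diff_avoid_set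
    using emeasure_gauss_irrationals irrationals_sets avoid_set_subset
    by (subst measure_Diff) (auto simp: measure_def gauss_measure_def)
qed

theorem lemma7:
  shows "\<exists>N0::nat. \<forall>n\<ge>N0. \<forall>x::nat. 1 \<le> x \<and>
     int x \<le> \<lfloor>sqrt ((4 + 2 / ln 2) * real n / ln (real n))\<rfloor> \<longrightarrow>
     \<bar>measure gauss_measure {w \<in> {0<..<1} - \<rat>. N_count n x w \<ge> 1}
        - (1 - (1 - pi_cf x) ^ n)\<bar> \<le> real n powr (-0.2)"
proof -
  obtain N0 where N0: "\<And>n x. n \<ge> N0 \<Longrightarrow> 1 \<le> x \<Longrightarrow> real x \<le> sqrt ((4 + 2 / ln 2) * real n / ln (real n)) \<Longrightarrow>
      measure gauss_measure (avoid_set x n) \<le> real n powr (-0.2) \<and> (1 - pi_cf x)^n \<le> real n powr (-0.2)"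
    using eventually_conj[OF eventually_measure_avoid_set_le eventually_no_hit_prob_le]
    unfolding eventually_sequentially by blast
  show ?thesis
  proof (intro exI[of _ N0] allI impI, elim conjE)
    fix n x :: nat
    assume "n \<ge> N0" "1 \<le> x" "int x \<le> \<lfloor>sqrt ((4 + 2 / ln 2) * real n / ln (real n))\<rfloor>"
    then have "measure gauss_measure (avoid_set x n) \<le> real n powr (-0.2)" "(1 - pi_cf x)^n \<le> real n powr (-0.2)"
      using N0 by (simp_all add: le_floor_iff)
    moreover have "0 \<le> (1 - pi_cf x)^n" using pi_cf_bounds(2)[OF \<open>1 \<le> x\<close>] by simp
    ultimately show "\<bar>measure gauss_measure {w \<in> {0<..<1} - \<rat>. N_count n x w \<ge> 1} - (1 - (1 - pi_cf x) ^ n)\<bar>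
        \<le> real n powr (-0.2)"
      unfolding measure_hit_set using measure_nonneg[of gauss_measure "avoid_set x n"] by linarith
  qed
qed

end
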